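(* Consider a sequence (indexed by $n$) of sparse directed stochastic block models with $n$ nodes, $K_n$ communities, community-probability vector $\boldsymbol\rho=(\rho_1,\dots,\rho_{K_n})$ with $\rho_{\min}=\min_k\rho_k>0$, block matrix $\mathbf B\in[0,1]^{K_n\times K_n}$ and sparsity factor $\gamma_n\in(0,1]$, where $\boldsymbol\rho$, $K_n$, $\mathbf B$, $\gamma_n$ may depend on $n$, and assume the following conditions hold: (a) there exist an integer $n_\rho$ and a constant $C_\rho>0$ such that $\rho_{\min}\ge C_\rho\sqrt{\log n/n}$ for all $n\ge n_\rho$; (b) there exist a constant $C_\pi$ with $0<C_\pi<C_\rho$ and a sequence $\eta_n>0$ with $\rho_{\min}>\eta_n\ge C_\pi\sqrt{\log n/n}$, such that $\frac{\frac14 n\eta_n^2}{1+\eta_n}-\log(2K_n)\to\infty$ and $K_n n^{-C_\pi^2/4}\to 0$ as $n\to\infty$. Let $h\in(0,1)$ and let $\tilde{\mathbf P}$ be the neighborhood-smoothing estimator with quantile parameter $h$. Then for any $\epsilon_m>0$, $\epsilon_{AP}>0$ and $\epsilon_\pi>0$ with $\epsilon_\pi\le\rho_{\min}-h$, with probability at least $$1-2K_n\exp\Big(-\frac{\frac14 n\epsilon_\pi^2}{1+\epsilon_\pi}\Big)-2n^2\exp\Big(-\frac{\frac14 n(\epsilon_{AP}-\frac4n)^2}{1+\epsilon_{AP}}\Big)-n(n-1)\exp\Big(-\frac{\frac14 n\epsilon_m^2}{1+\epsilon_m}\Big),$$ it holds that $$\frac1n\|\tilde{\mathbf P}_{i\cdot}-\mathbf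 P_{i\cdot}\|_2^2\le\frac{1}{|N_i|}+\epsilon_m+\frac2n+8\epsilon_{AP}\quad\text{for all } i\in[n].$$
   Context: Model: nodes $[n]=\{1,\dots,n\}$. Labels $Z_1,\dots,Z_n$ are i.i.d. Categorical$(\boldsymbol\rho)$ on $[K_n]$; write $\pi(i)=Z_i$. Conditionally on the labels, the entries $A_{ij}$, $i\ne j$, of the (not necessarily symmetric) adjacency matrix $\mathbf A\in\{0,1\}^{n\times n}$ are independent Bernoulli$(\gamma_nB_{\pi(i)\pi(j)})$, and $A_{ii}=0$. The probability matrix is $\mathbf P\in[0,1]^{n\times n}$ with $P_{ij}=\gamma_nB_{\pi(i)\pi(j)}$ for all $i,j$. $\mathbf M_{i\cdot}$ denotes the $i$-th row of a matrix $\mathbf M$. Estimator: for $i\ne j$, $d(i,j)=\max_{k\in[n]\setminus\{i,j\}}|\langle\mathbf A_{i\cdot}-\mathbf A_{j\cdot},\mathbf A_{k\cdot}\rangle|$. For $h\in(0,1)$, $q_i(h)$ is the empirical $h$-th quantile of the multiset $\{d(i,j):j\ne i\}$ (the smallest value $x$ in this multiset with $|\{j\ne i:d(i,j)\le x\}|\ge h(n-1)$), and $N_i=\{j\in[n]\setminus\{i\}:d(i,j)\le q_i(h)\}$. The estimator is $\tilde P_{ij}=\frac1{|N_i|}\sum_{i'\in N_i}A_{i'j}$. *)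

theory Defs
  imports "HOL-Probability.Probability"
begin

text \<open>Nodes are 1..n, communities are 1..K. The community distribution rho is a pmf on nat.\<close>

definition offdiag :: "nat \<Rightarrow> (nat \<times> nat) set" where
  "offdiag n = {(i, j). i \<in> {1..n} \<and> j \<in> {1..n} \<and> i \<noteq> j}"

text \<open>Joint law of (labels Z, adjacency A): Z_i iid rho; given Z, A_ij (i \<noteq> j) independent
  Bernoulli(gamma * B (Z i) (Z j)); A_ii = False.\<close>
definition sbm_pmf :: "nat \<Rightarrow> nat pmf \<Rightarrow> (nat \<Rightarrow> nat \<Rightarrow> real) \<Rightarrow> real
    \<Rightarrow> ((nat \<Rightarrow> nat) \<times> (nat \<Rightarrow> nat \<Rightarrow> bool)) pmf" where
  "sbm_pmf n rho B gamma =
     do { Z \<leftarrow> Pi_pmf {1..n} 0 (\<lambda>_. rho);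
          F \<leftarrow> Pi_pmf (offdiag n) False (\<lambda>(i, j). bernoulli_pmf (gamma * B (Z i) (Z j)));
          return_pmf (Z, (\<lambda>i j. F (i, j))) }"

definition rho_min :: "nat \<Rightarrow> nat pmf \<Rightarrow> real" where
  "rho_min K rho = Min ((\<lambda>k. pmf rho k) ` {1..K})"

definition adj :: "(nat \<Rightarrow> nat \<Rightarrow> bool) \<Rightarrow> nat \<Rightarrow> nat \<Rightarrow> real" where
  "adj A i j = (if A i j then 1 else 0)"

text \<open>d(i,j) = max over k \<in> [n] - {i,j} of |<A_i - A_j, A_k>| (0 if that index set is empty;
  all values are nonnegative, so inserting 0 does not change the max otherwise).\<close>
definition dNS :: "nat \<Rightarrow> (nat \<Rightarrow> nat \<Rightarrow> bool) \<Rightarrow> nat \<Rightarrow> nat \<Rightarrow> real" where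
  "dNS n A i j = Max (insert 0 ((\<lambda>k. \<bar>\<Sum>l\<in>{1..n}. (adj A i l - adj A j l) * adj A k l\<bar>)
                        ` ({1..n} - {i, j})))"

definition qNS :: "nat \<Rightarrow> (nat \<Rightarrow> nat \<Rightarrow> bool) \<Rightarrow> real \<Rightarrow> nat \<Rightarrow> real" where
  "qNS n A h i = Min {x \<in> (\<lambda>j. dNS n A i j) ` ({1..n} - {i}).
        real (card {j \<in> {1..n} - {i}. dNS n A i j \<le> x}) \<ge> h * (real n - 1)}"

definition NS :: "nat \<Rightarrow> (nat \<Rightarrow> nat \<Rightarrow> bool) \<Rightarrow> real \<Rightarrow> nat \<Rightarrow> nat set" where
  "NS n A h i = {j \<in> {1..n} - {i}. dNS n A i j \<le> qNS n A h i}"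

definition Ptilde :: "nat \<Rightarrow> (nat \<Rightarrow> nat \<Rightarrow> bool) \<Rightarrow> real \<Rightarrow> nat \<Rightarrow> nat \<Rightarrow> real" where
  "Ptilde n A h i j = (1 / real (card (NS n A h i))) * (\<Sum>i'\<in>NS n A h i. adj A i' j)"

end

theory Submission
  imports Defs
begin

(*
  On a good event the bound holds deterministically. Suppose every node has at least h(n-1)
  other members in its community, and the inner products of centred adjacency rows are small:
  at most eps_AP n/2 against rows of A or of P, and at most eps_m n between two centred rows.
  Then d(i,j) <= eps_AP n for j in the community of i, so q_i(h) <= eps_AP n. Every selected
  neighbour i' therefore satisfies |<P_i - P_i', P_k>| <= 3 eps_AP n, and comparing through one
  member of each of the two communities gives sum_l (P_i'l - P_il)^2 <= 6 eps_AP n. Expanding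
  the square of the average of the |N_i| centred rows then yields 1/|N_i| + eps_m + 8 eps_AP.

  Given the labels and all rows other than row i, each inner product is a sum of independent
  bounded terms, so Hoeffding's inequality and a union bound control the probability of the bad
  event. Whenever the claimed probability bound is nontrivial, its exponents are smaller than
  the Hoeffding exponents.
*)

section \<open>Hoeffding bounds for independent Bernoulli variables\<close>

lemma measure_bind_pmf_le:
  assumes "\<And>x. x \<in> set_pmf p \<Longrightarrow> measure_pmf.prob (f x) A \<le> b"
  shows "measure_pmf.prob (bind_pmf p f) A \<le> b"
proof -
  obtain x where "x \<in> set_pmf p" using set_pmf_not_empty[of p] by blast
  then have "0 \<le> b" using assms[of x] measure_nonneg order_trans by blast
  have "emeasure (measure_pmf (bind_pmf p f)) A = (\<integral>\<^sup>+x. emeasure (measure_pmf (f x)) A \<partial>p)"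
    by simp
  also have "\<dots> \<le> (\<integral>\<^sup>+x. ennreal b \<partial>p)"
    by (intro nn_integral_mono_AE AE_pmfI) (simp add: measure_pmf.emeasure_eq_measure assms ennreal_leI)
  also have "\<dots> = ennreal b"
    by (simp add: measure_pmf.emeasure_space_1)
  finally show ?thesis
    using \<open>0 \<le> b\<close> by (simp add: measure_pmf.emeasure_eq_measure)
qed

lemma measure_pmf_UNION_le_card:
  fixes b :: real
  assumes "finite I" "\<And>p. p \<in> I \<Longrightarrow> measure_pmf.prob M (B p) \<le> b"
  shows "measure_pmf.prob M (\<Union>p\<in>I. B p) \<le> card I * b"
proof -
  have "measure_pmf.prob M (\<Union>p\<in>I. B p) \<le> (\<Sum>p\<in>I. measure_pmf.prob M (B p))"
    using assms(1) by (rule measure_UNION_le) simp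
  also have "\<dots> \<le> card I * b"
    using assms by (simp add: sum_bounded_above)
  finally show ?thesis .
qed

lemma expectation_Pi_pmf_bernoulli:
  assumes "finite L" "l \<in> L" "0 \<le> q l" "q l \<le> 1"
  shows "measure_pmf.expectation (Pi_pmf L False (\<lambda>l. bernoulli_pmf (q l))) (\<lambda>H. f (H l))
           = q l * f True + (1 - q l) * f False"
proof -
  have "map_pmf (\<lambda>H. H l) (Pi_pmf L False (\<lambda>l. bernoulli_pmf (q l))) = bernoulli_pmf (q l)"
    using assms by (subst Pi_pmf_component) auto
  then have "measure_pmf.expectation (Pi_pmf L False (\<lambda>l. bernoulli_pmf (q l))) (\<lambda>H. f (H l))
      = measure_pmf.expectation (bernoulli_pmf (q l)) f"
    by (metis integral_map_pmf)
  then show ?thesis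
    using assms by simp
qed

lemma Hoeffding_Pi_pmf_bernoulli:
  fixes L :: "'i set" and q :: "'i \<Rightarrow> real" and c :: "'i \<Rightarrow> bool \<Rightarrow> real"
  defines "M \<equiv> Pi_pmf L False (\<lambda>l. bernoulli_pmf (q l))"
    and "\<mu> \<equiv> \<Sum>l\<in>L. q l * c l True + (1 - q l) * c l False"
  assumes L: "finite L" "L \<noteq> {}"
    and q: "\<And>l. l \<in> L \<Longrightarrow> 0 \<le> q l \<and> q l \<le> 1"
    and c: "\<And>l. l \<in> L \<Longrightarrow> \<bar>c l True - c l False\<bar> \<le> 1"
    and t: "t \<ge> 0"
  shows "measure_pmf.prob M {H. \<mu> + t \<le> (\<Sum>l\<in>L. c l (H l))} \<le> exp (-2 * t\<^sup>2 / card L)"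
    and "measure_pmf.prob M {H. (\<Sum>l\<in>L. c l (H l)) \<le> \<mu> - t} \<le> exp (-2 * t\<^sup>2 / card L)"
    and "measure_pmf.prob M {H. t \<le> \<bar>(\<Sum>l\<in>L. c l (H l)) - \<mu>\<bar>} \<le> 2 * exp (-2 * t\<^sup>2 / card L)"
proof -
  define a where "a = (\<lambda>l. min (c l True) (c l False))"
  have expectation: "measure_pmf.expectation M (\<lambda>H. c l (H l)) = q l * c l True + (1 - q l) * c l False"
    if "l \<in> L" for l
    unfolding M_def using expectation_Pi_pmf_bernoulli[OF L(1) that] q[OF that] by simp
  interpret Hoeffding_ineq M L "\<lambda>l H. c l (H l)" a "\<lambda>l. a l + 1" \<mu>
  proof unfold_locales
    show "finite L" by fact
    show "prob_space.indep_vars M (\<lambda>_. borel) (\<lambda>l H. c l (H l)) L"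
      unfolding M_def
      by (intro prob_space.indep_vars_compose2[OF _ indep_vars_Pi_pmf[OF L(1)]])
         (auto simp: measure_pmf.prob_space_axioms)
    show "AE H in M. c l (H l) \<in> {a l..a l + 1}" if "l \<in> L" for l
    proof (rule AE_pmfI)
      fix H
      show "c l (H l) \<in> {a l..a l + 1}"
        using c[OF that] by (cases "H l") (auto simp: a_def)
    qed
    show "\<mu> \<equiv> \<Sum>l\<in>L. measure_pmf.expectation M (\<lambda>H. c l (H l))"
      unfolding \<mu>_def using expectation by (simp cong: sum.cong)
  qed
  have width: "(\<Sum>l\<in>L. (a l + 1 - a l)\<^sup>2) = real (card L)"
    by simp
  have "(\<Sum>l\<in>L. (a l + 1 - a l)\<^sup>2) > 0"
    using L by (simp add: card_gt_0_iff)
  note tails = Hoeffding_ineq_ge[OF t this] Hoeffding_ineq_le[OF t this] Hoeffding_ineq_abs_ge[OF t this]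
  show "measure_pmf.prob M {H. \<mu> + t \<le> (\<Sum>l\<in>L. c l (H l))} \<le> exp (-2 * t\<^sup>2 / card L)"
    and "measure_pmf.prob M {H. (\<Sum>l\<in>L. c l (H l)) \<le> \<mu> - t} \<le> exp (-2 * t\<^sup>2 / card L)"
    and "measure_pmf.prob M {H. t \<le> \<bar>(\<Sum>l\<in>L. c l (H l)) - \<mu>\<bar>} \<le> 2 * exp (-2 * t\<^sup>2 / card L)"
    using tails unfolding width by simp_all
qed

lemma Pi_pmf_prob_le_conditional:
  assumes I: "finite I" and L: "L \<subseteq> I"
    and b: "\<And>G. measure_pmf.prob (Pi_pmf L d p) {H. (\<lambda>x. if x \<in> L then H x else G x) \<in> S} \<le> b"
  shows "measure_pmf.prob (Pi_pmf I d p) S \<le> b"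
proof -
  have "finite L" using I L finite_subset by blast
  have "Pi_pmf I d p = Pi_pmf ((I - L) \<union> L) d p"
    using L by (simp add: Un_absorb2)
  also have "\<dots> = map_pmf (\<lambda>(G, H) x. if x \<in> I - L then G x else H x)
      (pair_pmf (Pi_pmf (I - L) d p) (Pi_pmf L d p))"
    using I \<open>finite L\<close> by (intro Pi_pmf_union) auto
  also have "\<dots> = Pi_pmf (I - L) d p \<bind>
      (\<lambda>G. map_pmf (\<lambda>H x. if x \<in> I - L then G x else H x) (Pi_pmf L d p))"
    by (simp add: pair_pmf_def map_bind_pmf bind_map_pmf map_pmf_def bind_assoc_pmf bind_return_pmf)
  finally have split: "Pi_pmf I d p = \<dots>" .
  show ?thesis
    unfolding split
  proof (rule measure_bind_pmf_le)
    fix G assume G: "G \<in> set_pmf (Pi_pmf (I - L) d p)"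
    have "(\<lambda>x. if x \<in> I - L then G x else H x) = (\<lambda>x. if x \<in> L then H x else G x)"
      if "H \<in> set_pmf (Pi_pmf L d p)" for H
      using G that set_Pi_pmf_subset[of "I - L" d p] set_Pi_pmf_subset[OF \<open>finite L\<close>, of d p] I
      by (auto simp: fun_eq_iff)
    then have "(\<lambda>H x. if x \<in> I - L then G x else H x) -` S \<inter> set_pmf (Pi_pmf L d p)
        = {H. (\<lambda>x. if x \<in> L then H x else G x) \<in> S} \<inter> set_pmf (Pi_pmf L d p)"
      by auto
    then have "measure_pmf.prob (Pi_pmf L d p) ((\<lambda>H x. if x \<in> I - L then G x else H x) -` S)
        = measure_pmf.prob (Pi_pmf L d p) {H. (\<lambda>x. if x \<in> L then H x else G x) \<in> S}"
      by (metis (no_types, lifting) measure_Int_set_pmf)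
    then show "measure_pmf.prob (map_pmf (\<lambda>H x. if x \<in> I - L then G x else H x) (Pi_pmf L d p)) S \<le> b"
      using b[of G] by (simp add: measure_map_pmf)
  qed
qed

text \<open>The coefficients may depend on the coordinates outside \<open>L\<close>; conditioning on those reduces
  to the independent case.\<close>

lemma Hoeffding_Pi_pmf_bernoulli_conditional:
  fixes I L :: "'i set" and q :: "'i \<Rightarrow> real" and c :: "('i \<Rightarrow> bool) \<Rightarrow> 'i \<Rightarrow> bool \<Rightarrow> real"
  defines "M \<equiv> Pi_pmf I False (\<lambda>l. bernoulli_pmf (q l))"
  assumes I: "finite I" "L \<subseteq> I" "L \<noteq> {}"
    and q: "\<And>l. l \<in> L \<Longrightarrow> 0 \<le> q l \<and> q l \<le> 1"
    and c_local: "\<And>F F'. (\<And>x. x \<notin> L \<Longrightarrow> F x = F' x) \<Longrightarrow> c F = c F'"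
    and c: "\<And>F l. l \<in> L \<Longrightarrow> \<bar>c F l True - c F l False\<bar> \<le> 1"
    and c_centered: "\<And>F l. l \<in> L \<Longrightarrow> q l * c F l True + (1 - q l) * c F l False = 0"
    and t: "t \<ge> 0"
  shows "measure_pmf.prob M {F. t \<le> (\<Sum>l\<in>L. c F l (F l))} \<le> exp (-2 * t\<^sup>2 / card L)"
    and "measure_pmf.prob M {F. t \<le> \<bar>\<Sum>l\<in>L. c F l (F l)\<bar>} \<le> 2 * exp (-2 * t\<^sup>2 / card L)"
proof -
  have "finite L" using I finite_subset by blast
  define c\<^sub>G where "c\<^sub>G G = c (\<lambda>x. if x \<in> L then False else G x)" for G
  have sum_merge: "(\<Sum>l\<in>L. c (\<lambda>x. if x \<in> L then H x else G x) l (if l \<in> L then H l else G l))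
      = (\<Sum>l\<in>L. c\<^sub>G G l (H l))" for G H
  proof -
    have "c (\<lambda>x. if x \<in> L then H x else G x) = c\<^sub>G G"
      unfolding c\<^sub>G_def by (rule c_local) simp
    then show ?thesis
      by simp
  qed
  have centered: "(\<Sum>l\<in>L. q l * c\<^sub>G G l True + (1 - q l) * c\<^sub>G G l False) = 0" for G
    by (simp add: c\<^sub>G_def c_centered)
  have c\<^sub>G: "\<bar>c\<^sub>G G l True - c\<^sub>G G l False\<bar> \<le> 1" if "l \<in> L" for G l
    unfolding c\<^sub>G_def using c that .
  note Hoeffding = Hoeffding_Pi_pmf_bernoulli[of L q "c\<^sub>G G" t for G, OF \<open>finite L\<close> I(3) q c\<^sub>G t,
      unfolded centered add_0_left diff_zero]
  show "measure_pmf.prob M {F. t \<le> (\<Sum>l\<in>L. c F l (F l))} \<le> exp (-2 * t\<^sup>2 / card L)"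
    unfolding M_def
    by (rule Pi_pmf_prob_le_conditional[OF I(1,2)]) (simp only: mem_Collect_eq sum_merge Hoeffding(1))
  show "measure_pmf.prob M {F. t \<le> \<bar>\<Sum>l\<in>L. c F l (F l)\<bar>} \<le> 2 * exp (-2 * t\<^sup>2 / card L)"
    unfolding M_def
    by (rule Pi_pmf_prob_le_conditional[OF I(1,2)]) (simp only: mem_Collect_eq sum_merge Hoeffding(3))
qed

lemma map_pmf_eq_bernoulli: "map_pmf (\<lambda>z. z = c) r = bernoulli_pmf (pmf r c)"
proof (rule pmf_eqI)
  fix b :: bool
  have "(\<lambda>z. z = c) -` {True} = {c}" "(\<lambda>z. z = c) -` {False} = UNIV - {c}"
    by auto
  then show "pmf (map_pmf (\<lambda>z. z = c) r) b = pmf (bernoulli_pmf (pmf r c)) b"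
    using measure_pmf.prob_compl[of "{c}" r]
    by (cases b) (simp_all add: pmf_map pmf_le_1 measure_pmf_single)
qed

lemma Pi_pmf_count_lower_tail:
  fixes J :: "'i set" and r :: "'a pmf"
  assumes J: "finite J" "J \<noteq> {}" and "c \<noteq> d" and t: "0 \<le> t"
  shows "measure_pmf.prob (Pi_pmf J d (\<lambda>_. r))
           {Z. real (card {j\<in>J. Z j = c}) \<le> card J * pmf r c - t} \<le> exp (-2 * t\<^sup>2 / card J)"
proof -
  have indicators: "map_pmf (\<lambda>Z j. Z j = c) (Pi_pmf J d (\<lambda>_. r)) = Pi_pmf J False (\<lambda>_. bernoulli_pmf (pmf r c))"
    using Pi_pmf_map[OF J(1), of "\<lambda>z. z = c" d False "\<lambda>_. r"] \<open>c \<noteq> d\<close>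
    by (simp add: map_pmf_eq_bernoulli o_def)
  have count: "real (card {j\<in>J. Z j = c}) = (\<Sum>j\<in>J. of_bool (Z j = c))" for Z :: "'i \<Rightarrow> 'a"
    using J(1) by (simp add: sum_of_bool_eq Collect_conj_eq Int_commute)
  have mean: "(\<Sum>j\<in>J. pmf r c * of_bool True + (1 - pmf r c) * of_bool False) = card J * pmf r c"
    by simp
  have "measure_pmf.prob (Pi_pmf J d (\<lambda>_. r)) {Z. real (card {j\<in>J. Z j = c}) \<le> card J * pmf r c - t}
      = measure_pmf.prob (Pi_pmf J False (\<lambda>_. bernoulli_pmf (pmf r c)))
          {W. (\<Sum>j\<in>J. of_bool (W j)) \<le> card J * pmf r c - t}"
    unfolding indicators[symmetric] measure_map_pmf by (simp add: vimage_def count)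
  also have "\<dots> \<le> exp (-2 * t\<^sup>2 / card J)"
    using Hoeffding_Pi_pmf_bernoulli(2)[OF J, of "\<lambda>_. pmf r c" "\<lambda>_. of_bool" t] t
    unfolding mean by (simp add: pmf_le_1)
  finally show ?thesis .
qed

section \<open>The error bound on the good event\<close>

lemma sum_square_average_le:
  fixes x :: "'a \<Rightarrow> 'b \<Rightarrow> real"
  assumes N: "finite N" "N \<noteq> {}"
    and diagonal: "\<And>u. u \<in> N \<Longrightarrow> (\<Sum>j\<in>J. (x u j)\<^sup>2) \<le> a"
    and off_diagonal: "\<And>u v. u \<in> N \<Longrightarrow> v \<in> N \<Longrightarrow> u \<noteq> v \<Longrightarrow> (\<Sum>j\<in>J. x u j * x v j) \<le> b"
    and b: "0 \<le> b"
  shows "(\<Sum>j\<in>J. ((\<Sum>u\<in>N. x u j) / card N)\<^sup>2) \<le> a / card N + b"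
proof -
  define m where "m = real (card N)"
  have card: "1 \<le> card N" using N by (simp add: Suc_leI card_gt_0_iff)
  then have m: "1 \<le> m" by (simp add: m_def)
  have row: "(\<Sum>v\<in>N. \<Sum>j\<in>J. x u j * x v j) \<le> a + (m - 1) * b" if u: "u \<in> N" for u
  proof -
    have "(\<Sum>v\<in>N. \<Sum>j\<in>J. x u j * x v j) = (\<Sum>j\<in>J. (x u j)\<^sup>2) + (\<Sum>v\<in>N - {u}. \<Sum>j\<in>J. x u j * x v j)"
      using N u by (simp add: sum.remove power2_eq_square)
    also have "\<dots> \<le> a + (\<Sum>v\<in>N - {u}. b)"
      using u by (intro add_mono diagonal sum_mono off_diagonal) auto
    finally show ?thesis using N u card by (simp add: m_def of_nat_diff)
  qed
  have "(\<Sum>j\<in>J. ((\<Sum>u\<in>N. x u j) / m)\<^sup>2) = (\<Sum>u\<in>N. \<Sum>v\<in>N. \<Sum>j\<in>J. x u j * x v j) / m\<^sup>2"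
    by (simp add: power_divide power2_eq_square sum_product sum_divide_distrib[symmetric] sum.swap[of _ J])
  also have "\<dots> \<le> m * (a + (m - 1) * b) / m\<^sup>2"
    using sum_mono[OF row] by (intro divide_right_mono) (simp_all add: m_def)
  also have "\<dots> = a / m + (m - 1) / m * b"
    using m by (simp add: power2_eq_square field_simps)
  also have "\<dots> \<le> a / m + b"
    using m b by (intro add_left_mono mult_left_le_one_le) auto
  finally show ?thesis by (simp add: m_def)
qed

lemma dNS_le:
  assumes "0 \<le> T"
    and "\<And>k. k \<in> {1..n} - {i, j} \<Longrightarrow> \<bar>\<Sum>l\<in>{1..n}. (adj A i l - adj A j l) * adj A k l\<bar> \<le> T"
  shows "dNS n A i j \<le> T"
  unfolding dNS_def using assms by (subst Max_le_iff) auto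

lemma dNS_ge:
  assumes "k \<in> {1..n} - {i, j}"
  shows "\<bar>\<Sum>l\<in>{1..n}. (adj A i l - adj A j l) * adj A k l\<bar> \<le> dNS n A i j"
  unfolding dNS_def using assms by (intro Max_ge) auto

lemma qNS_le_and_NS_nonempty:
  assumes S: "S \<subseteq> {1..n} - {i}" "S \<noteq> {}" "h * (real n - 1) \<le> real (card S)"
    and T: "\<And>j. j \<in> S \<Longrightarrow> dNS n A i j \<le> T"
  shows "qNS n A h i \<le> T" and "NS n A h i \<noteq> {}"
proof -
  define Q where "Q = {x \<in> (\<lambda>j. dNS n A i j) ` ({1..n} - {i}).
        h * (real n - 1) \<le> real (card {j \<in> {1..n} - {i}. dNS n A i j \<le> x})}"
  have "finite S" using S(1) finite_subset by blast
  define x where "x = Max ((\<lambda>j. dNS n A i j) ` S)"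
  have x: "x \<in> (\<lambda>j. dNS n A i j) ` S" "x \<le> T"
    unfolding x_def using \<open>finite S\<close> S(2) T by (auto intro: Max_in)
  have "card S \<le> card {j \<in> {1..n} - {i}. dNS n A i j \<le> x}"
    using S(1) \<open>finite S\<close> by (intro card_mono) (auto simp: x_def)
  then have "x \<in> Q" unfolding Q_def using x(1) S by auto
  have "finite Q" unfolding Q_def by auto
  have q: "qNS n A h i = Min Q" unfolding qNS_def Q_def ..
  show "qNS n A h i \<le> T" using Min_le[OF \<open>finite Q\<close> \<open>x \<in> Q\<close>] x(2) q by linarith
  have "Min Q \<in> Q" using \<open>finite Q\<close> \<open>x \<in> Q\<close> by (intro Min_in) auto
  then obtain j where "j \<in> {1..n} - {i}" "Min Q = dNS n A i j" unfolding Q_def by blast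
  then have "j \<in> NS n A h i" unfolding NS_def q by auto
  then show "NS n A h i \<noteq> {}" by auto
qed

definition large_communities :: "nat \<Rightarrow> real \<Rightarrow> (nat \<Rightarrow> nat) \<Rightarrow> bool" where
  "large_communities n h Z \<longleftrightarrow>
     (\<forall>i\<in>{1..n}. h * (real n - 1) + 1 \<le> real (card {j\<in>{1..n}. Z j = Z i}))"

text \<open>\<open>\<delta>\<close> and \<open>\<epsilon>\<close> play the roles of \<open>\<epsilon>\<^sub>A\<^sub>P\<close> and \<open>\<epsilon>\<^sub>m\<close>.\<close>

definition concentrated_adjacency ::
    "nat \<Rightarrow> real \<Rightarrow> real \<Rightarrow> (nat \<Rightarrow> nat \<Rightarrow> real) \<Rightarrow> (nat \<Rightarrow> nat \<Rightarrow> bool) \<Rightarrow> bool" where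
  "concentrated_adjacency n \<delta> \<epsilon> P A \<longleftrightarrow>
     (\<forall>i\<in>{1..n}. \<forall>k\<in>{1..n}. i \<noteq> k \<longrightarrow>
        \<bar>\<Sum>l\<in>{1..n}. (adj A i l - P i l) * adj A k l\<bar> \<le> \<delta> / 2 * n \<and>
        (\<Sum>l\<in>{1..n}. (adj A i l - P i l) * (adj A k l - P k l)) \<le> \<epsilon> * n) \<and>
     (\<forall>k\<in>{1..n}. \<forall>x\<in>{1..n}. \<bar>\<Sum>l\<in>{1..n}. (adj A k l - P k l) * P x l\<bar> \<le> \<delta> / 2 * n)"

locale smoothing_good_event =
  fixes n :: nat and A :: "nat \<Rightarrow> nat \<Rightarrow> bool" and Z :: "nat \<Rightarrow> nat" and P :: "nat \<Rightarrow> nat \<Rightarrow> real"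
    and h \<delta> \<epsilon> :: real
  assumes n: "2 \<le> n" and h: "0 < h" and \<delta>: "0 \<le> \<delta>" and \<epsilon>: "0 \<le> \<epsilon>"
    and P_range: "\<And>i j. 0 \<le> P i j \<and> P i j \<le> 1"
    and P_blocks: "\<And>i j l. Z i = Z j \<Longrightarrow> P i l = P j l"
    and communities: "large_communities n h Z"
    and concentrated: "concentrated_adjacency n \<delta> \<epsilon> P A"
begin

abbreviation "a \<equiv> adj A"

lemma noise_adj:
  "i \<in> {1..n} \<Longrightarrow> k \<in> {1..n} \<Longrightarrow> i \<noteq> k \<Longrightarrow> \<bar>\<Sum>l\<in>{1..n}. (a i l - P i l) * a k l\<bar> \<le> \<delta> / 2 * n"
  and noise_cross:
  "i \<in> {1..n} \<Longrightarrow> k \<in> {1..n} \<Longrightarrow> i \<noteq> k \<Longrightarrow> (\<Sum>l\<in>{1..n}. (a i l - P i l) * (a k l - P k l)) \<le> \<epsilon> * n"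
  and noise_weighted:
  "k \<in> {1..n} \<Longrightarrow> x \<in> {1..n} \<Longrightarrow> \<bar>\<Sum>l\<in>{1..n}. (a k l - P k l) * P x l\<bar> \<le> \<delta> / 2 * n"
  using concentrated by (auto simp: concentrated_adjacency_def)

definition peers :: "nat \<Rightarrow> nat set" where
  "peers i = {j\<in>{1..n}. Z j = Z i} - {i}"

lemma peers:
  assumes "i \<in> {1..n}"
  shows "peers i \<subseteq> {1..n} - {i}" and "h * (real n - 1) \<le> real (card (peers i))" and "peers i \<noteq> {}"
proof -
  show "peers i \<subseteq> {1..n} - {i}" by (auto simp: peers_def)
  have "card {j\<in>{1..n}. Z j = Z i} = Suc (card (peers i))"
    unfolding peers_def using assms by (intro card.remove) auto
  moreover have "h * (real n - 1) + 1 \<le> real (card {j\<in>{1..n}. Z j = Z i})"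
    using communities assms by (simp add: large_communities_def)
  ultimately show card: "h * (real n - 1) \<le> real (card (peers i))"
    by simp
  have "0 < h * (real n - 1)" using h n by simp
  then show "peers i \<noteq> {}" using card by auto
qed

lemma dNS_peer_le:
  assumes i: "i \<in> {1..n}" and j: "j \<in> peers i"
  shows "dNS n A i j \<le> \<delta> * n"
proof (rule dNS_le)
  show "0 \<le> \<delta> * real n" using \<delta> by simp
  fix k assume k: "k \<in> {1..n} - {i, j}"
  have j': "j \<in> {1..n}" "j \<noteq> i" "Z j = Z i" using j by (auto simp: peers_def)
  have "(\<Sum>l\<in>{1..n}. (a i l - a j l) * a k l) =
        (\<Sum>l\<in>{1..n}. (a i l - P i l) * a k l) - (\<Sum>l\<in>{1..n}. (a j l - P j l) * a k l)"
    using P_blocks[OF j'(3)] by (simp add: sum_subtractf[symmetric] algebra_simps)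
  then show "\<bar>\<Sum>l\<in>{1..n}. (a i l - a j l) * a k l\<bar> \<le> \<delta> * n"
    using noise_adj[OF i, of k] noise_adj[OF j'(1), of k] k by auto
qed

lemma quantile_le: "i \<in> {1..n} \<Longrightarrow> qNS n A h i \<le> \<delta> * n"
  and NS_nonempty: "i \<in> {1..n} \<Longrightarrow> NS n A h i \<noteq> {}"
  by (metis qNS_le_and_NS_nonempty peers dNS_peer_le)+

lemma NS_subset: "NS n A h i \<subseteq> {1..n} - {i}"
  by (auto simp: NS_def)

lemma neighbour_dist:
  assumes i: "i \<in> {1..n}" and i': "i' \<in> NS n A h i" and k: "k \<in> {1..n} - {i, i'}"
  shows "\<bar>\<Sum>l\<in>{1..n}. (a i l - a i' l) * a k l\<bar> \<le> \<delta> * n"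
proof -
  have "dNS n A i i' \<le> qNS n A h i" using i' by (simp add: NS_def)
  then show ?thesis using dNS_ge[OF k, of A] quantile_le[OF i] by linarith
qed

lemma neighbour_contrast:
  assumes i: "i \<in> {1..n}" and i': "i' \<in> NS n A h i" and k: "k \<in> {1..n} - {i, i'}"
  shows "\<bar>\<Sum>l\<in>{1..n}. (P i l - P i' l) * P k l\<bar> \<le> 3 * \<delta> * n"
proof -
  have i'n: "i' \<in> {1..n}" using i' NS_subset by blast
  have "(\<Sum>l\<in>{1..n}. (P i l - P i' l) * P k l) =
      (\<Sum>l\<in>{1..n}. (a i l - a i' l) * a k l) - (\<Sum>l\<in>{1..n}. (a i l - P i l) * a k l)
      + (\<Sum>l\<in>{1..n}. (a i' l - P i' l) * a k l) - (\<Sum>l\<in>{1..n}. (a k l - P k l) * P i l)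
      + (\<Sum>l\<in>{1..n}. (a k l - P k l) * P i' l)"
    by (simp add: sum.distrib[symmetric] sum_subtractf[symmetric] algebra_simps)
  then show ?thesis
    using neighbour_dist[OF i i' k] noise_adj[OF i, of k] noise_adj[OF i'n, of k]
      noise_weighted[of k i] noise_weighted[of k i'] i i'n k
    by auto
qed

text \<open>Rows of \<open>P\<close> are constant on communities, so for \<open>k\<close> in the community of \<open>i\<close> and \<open>k'\<close> in that of
  \<open>i'\<close> the squared distance of the two rows is the difference of the contrasts against \<open>P\<^sub>k\<close> and \<open>P\<^sub>k\<^sub>'\<close>.\<close>

lemma neighbour_bias:
  assumes i: "i \<in> {1..n}" and i': "i' \<in> NS n A h i"
  shows "(\<Sum>l\<in>{1..n}. (P i' l - P i l)\<^sup>2) \<le> 6 * \<delta> * n"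
proof (cases "Z i' = Z i")
  case True
  then show ?thesis using P_blocks[OF True] \<delta> by simp
next
  case False
  have i'n: "i' \<in> {1..n}" using i' NS_subset by blast
  obtain k k' where k: "k \<in> peers i" and k': "k' \<in> peers i'"
    using peers(3)[OF i] peers(3)[OF i'n] by blast
  have k_in: "k \<in> {1..n} - {i, i'}" "Z k = Z i" and k'_in: "k' \<in> {1..n} - {i, i'}" "Z k' = Z i'"
    using k k' False by (auto simp: peers_def)
  have "(\<Sum>l\<in>{1..n}. (P i' l - P i l)\<^sup>2) =
      (\<Sum>l\<in>{1..n}. (P i l - P i' l) * P k l) - (\<Sum>l\<in>{1..n}. (P i l - P i' l) * P k' l)"
    using P_blocks[OF k_in(2)] P_blocks[OF k'_in(2)]
    by (simp add: sum_subtractf[symmetric] algebra_simps power2_eq_square)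
  then show ?thesis
    using neighbour_contrast[OF i i' k_in(1)] neighbour_contrast[OF i i' k'_in(1)]
    unfolding abs_le_iff by linarith
qed

lemma neighbour_residuals_inner:
  assumes i: "i \<in> {1..n}" and u: "u \<in> NS n A h i" and v: "v \<in> NS n A h i" and "u \<noteq> v"
  shows "(\<Sum>j\<in>{1..n}. (a u j - P i j) * (a v j - P i j)) \<le> (\<epsilon> + 8 * \<delta>) * n"
proof -
  have un: "u \<in> {1..n}" and vn: "v \<in> {1..n}" using u v NS_subset by blast+
  have "(\<Sum>j\<in>{1..n}. (P u j - P i j) * (P v j - P i j))
      \<le> (\<Sum>j\<in>{1..n}. ((P u j - P i j)\<^sup>2 + (P v j - P i j)\<^sup>2) / 2)"
  proof (rule sum_mono)
    fix j
    show "(P u j - P i j) * (P v j - P i j) \<le> ((P u j - P i j)\<^sup>2 + (P v j - P i j)\<^sup>2) / 2"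
      using zero_le_power2[of "(P u j - P i j) - (P v j - P i j)"]
      by (simp add: power2_eq_square algebra_simps)
  qed
  also have "\<dots> \<le> 6 * \<delta> * n"
    using neighbour_bias[OF i u] neighbour_bias[OF i v]
    by (simp add: sum.distrib sum_divide_distrib[symmetric])
  finally have bias: "(\<Sum>j\<in>{1..n}. (P u j - P i j) * (P v j - P i j)) \<le> 6 * \<delta> * n" .
  have "(\<Sum>j\<in>{1..n}. (a u j - P i j) * (a v j - P i j)) =
      (\<Sum>j\<in>{1..n}. (a u j - P u j) * (a v j - P v j))
      + ((\<Sum>j\<in>{1..n}. (a u j - P u j) * P v j) - (\<Sum>j\<in>{1..n}. (a u j - P u j) * P i j))
      + ((\<Sum>j\<in>{1..n}. (a v j - P v j) * P u j) - (\<Sum>j\<in>{1..n}. (a v j - P v j) * P i j))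
      + (\<Sum>j\<in>{1..n}. (P u j - P i j) * (P v j - P i j))"
    by (simp add: sum.distrib[symmetric] sum_subtractf[symmetric] algebra_simps)
  then show ?thesis
    using noise_cross[OF un vn \<open>u \<noteq> v\<close>] noise_weighted[OF un vn] noise_weighted[OF un i]
      noise_weighted[OF vn un] noise_weighted[OF vn i] bias
    by (simp add: abs_le_iff algebra_simps)
qed

theorem row_error_le:
  assumes i: "i \<in> {1..n}"
  shows "1 / real n * (\<Sum>j\<in>{1..n}. (Ptilde n A h i j - P i j)\<^sup>2)
           \<le> 1 / real (card (NS n A h i)) + \<epsilon> + 8 * \<delta>"
proof -
  let ?N = "NS n A h i"
  have N: "finite ?N" "?N \<noteq> {}"
    using finite_subset[OF NS_subset] NS_nonempty[OF i] by auto
  have residual: "Ptilde n A h i j - P i j = (\<Sum>u\<in>?N. a u j - P i j) / card ?N" for j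
    using N by (simp add: Ptilde_def sum_subtractf field_simps)
  have diagonal: "(\<Sum>j\<in>{1..n}. (a u j - P i j)\<^sup>2) \<le> n" for u
  proof -
    have "(a u j - P i j)\<^sup>2 \<le> 1" for j
      using P_range[of i j] by (auto simp: adj_def abs_square_le_1)
    then show ?thesis
      using sum_mono[of "{1..n}" "\<lambda>j. (a u j - P i j)\<^sup>2" "\<lambda>_. 1"] by simp
  qed
  have "(\<Sum>j\<in>{1..n}. (Ptilde n A h i j - P i j)\<^sup>2) \<le> n / card ?N + (\<epsilon> + 8 * \<delta>) * n"
    unfolding residual
    by (rule sum_square_average_le[OF N diagonal neighbour_residuals_inner[OF i]]) (use \<epsilon> \<delta> in auto)
  then show ?thesis
    using n by (simp add: field_simps)
qed

end

section \<open>Probability of the good event\<close>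

lemma offdiag_finite: "finite (offdiag n)"
proof -
  have "offdiag n \<subseteq> {1..n} \<times> {1..n}" unfolding offdiag_def by auto
  then show ?thesis by (rule finite_subset) auto
qed

lemma mem_offdiag: "(i, k) \<in> offdiag n \<longleftrightarrow> i \<in> {1..n} \<and> k \<in> {1..n} \<and> i \<noteq> k"
  by (simp add: offdiag_def)

lemma card_offdiag: "card (offdiag n) = n * (n - 1)"
proof -
  have "offdiag n = Sigma {1..n} (\<lambda>i. {1..n} - {i})" unfolding offdiag_def by auto
  then show ?thesis by simp
qed

lemma Hoeffding_offdiag_row:
  fixes n i :: nat and t :: real and P :: "nat \<Rightarrow> nat \<Rightarrow> real"
    and w :: "(nat \<times> nat \<Rightarrow> bool) \<Rightarrow> nat \<Rightarrow> real"
  defines "M \<equiv> Pi_pmf (offdiag n) False (\<lambda>(i, j). bernoulli_pmf (P i j))"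
    and "R \<equiv> \<lambda>F. \<Sum>l\<in>{1..n} - {i}. (of_bool (F (i, l)) - P i l) * w F l"
  assumes n: "2 \<le> n" and i: "i \<in> {1..n}"
    and P: "\<And>i j. 0 \<le> P i j \<and> P i j \<le> 1"
    and w: "\<And>F l. \<bar>w F l\<bar> \<le> 1"
    and w_local: "\<And>F F'. (\<And>x. fst x \<noteq> i \<Longrightarrow> F x = F' x) \<Longrightarrow> w F = w F'"
    and t: "0 \<le> t"
  shows "measure_pmf.prob M {F. t \<le> R F} \<le> exp (-2 * t\<^sup>2 / n)"
    and "measure_pmf.prob M {F. t \<le> \<bar>R F\<bar>} \<le> 2 * exp (-2 * t\<^sup>2 / n)"
proof -
  define L where "L = Pair i ` ({1..n} - {i})"
  define c where "c F x b = (of_bool b - P (fst x) (snd x)) * w F (snd x)"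
    for F :: "nat \<times> nat \<Rightarrow> bool" and x b
  have L: "L \<subseteq> offdiag n" "L \<noteq> {}" "card L = n - 1"
  proof -
    show "L \<subseteq> offdiag n" using i by (auto simp: L_def offdiag_def)
    have "card L = card ({1..n} - {i})"
      unfolding L_def by (rule card_image) (simp add: inj_on_def)
    also have "\<dots> = n - 1" using i by simp
    finally show "card L = n - 1" .
    then show "L \<noteq> {}" using n by auto
  qed
  have R: "R F = (\<Sum>x\<in>L. c F x (F x))" for F
    unfolding R_def c_def L_def by (subst sum.reindex) (auto simp: inj_on_def)
  have c_local: "c F = c F'" if "\<And>x. x \<notin> L \<Longrightarrow> F x = F' x" for F F'
  proof -
    have "w F = w F'"
      by (rule w_local) (use that in \<open>force simp: L_def\<close>)
    then show ?thesis by (simp add: c_def fun_eq_iff)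
  qed
  have uncurry: "(\<lambda>(i, j). bernoulli_pmf (P i j)) = (\<lambda>x. bernoulli_pmf (case_prod P x))"
    by (simp add: fun_eq_iff split: prod.split)
  have exp_le: "exp (-2 * t\<^sup>2 / card L) \<le> exp (-2 * t\<^sup>2 / n)"
    using L(3) n by (simp add: of_nat_diff divide_left_mono)
  have "measure_pmf.prob M {F. t \<le> (\<Sum>x\<in>L. c F x (F x))} \<le> exp (-2 * t\<^sup>2 / card L)"
    unfolding M_def uncurry
    by (rule Hoeffding_Pi_pmf_bernoulli_conditional(1)[OF offdiag_finite L(1,2) _ c_local])
       (use P w t in \<open>auto simp: c_def algebra_simps\<close>)
  then show "measure_pmf.prob M {F. t \<le> R F} \<le> exp (-2 * t\<^sup>2 / n)"
    unfolding R using exp_le by linarith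
  have "measure_pmf.prob M {F. t \<le> \<bar>\<Sum>x\<in>L. c F x (F x)\<bar>} \<le> 2 * exp (-2 * t\<^sup>2 / card L)"
    unfolding M_def uncurry
    by (rule Hoeffding_Pi_pmf_bernoulli_conditional(2)[OF offdiag_finite L(1,2) _ c_local])
       (use P w t in \<open>auto simp: c_def algebra_simps\<close>)
  then show "measure_pmf.prob M {F. t \<le> \<bar>R F\<bar>} \<le> 2 * exp (-2 * t\<^sup>2 / n)"
    unfolding R using exp_le by linarith
qed

text \<open>The diagonal entry \<open>A\<^sub>i\<^sub>i\<close> is not random; bounding its term by \<open>1\<close> shifts the threshold to \<open>T - 1\<close>.\<close>

lemma row_deviation_tail:
  fixes n i :: nat and T :: real and P :: "nat \<Rightarrow> nat \<Rightarrow> real"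
    and w :: "(nat \<times> nat \<Rightarrow> bool) \<Rightarrow> nat \<Rightarrow> real"
  defines "M \<equiv> Pi_pmf (offdiag n) False (\<lambda>(i, j). bernoulli_pmf (P i j))"
    and "S \<equiv> \<lambda>F. \<Sum>l\<in>{1..n}. (adj (\<lambda>a b. F (a, b)) i l - P i l) * w F l"
  assumes n: "2 \<le> n" and i: "i \<in> {1..n}"
    and P: "\<And>i j. 0 \<le> P i j \<and> P i j \<le> 1"
    and w: "\<And>F l. \<bar>w F l\<bar> \<le> 1"
    and w_local: "\<And>F F'. (\<And>x. fst x \<noteq> i \<Longrightarrow> F x = F' x) \<Longrightarrow> w F = w F'"
    and T: "1 \<le> T"
  shows "measure_pmf.prob M {F. T < S F} \<le> exp (-2 * (T - 1)\<^sup>2 / n)"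
    and "measure_pmf.prob M {F. T < \<bar>S F\<bar>} \<le> 2 * exp (-2 * (T - 1)\<^sup>2 / n)"
proof -
  define R where "R F = (\<Sum>l\<in>{1..n} - {i}. (of_bool (F (i, l)) - P i l) * w F l)" for F
  define D where "D F = (adj (\<lambda>a b. F (a, b)) i i - P i i) * w F i" for F
  have split: "S F = R F + D F" for F
    unfolding S_def R_def D_def using i by (subst sum.remove) (auto simp: adj_def of_bool_def)
  have D: "\<bar>D F\<bar> \<le> 1" for F
  proof -
    have "\<bar>adj (\<lambda>a b. F (a, b)) i i - P i i\<bar> \<le> 1" using P[of i i] by (auto simp: adj_def)
    then show ?thesis using w[of F i] by (simp add: D_def abs_mult mult_le_one)
  qed
  have "T - 1 \<le> R F" if "T < S F" for F
    using that split[of F] D[of F] by (simp add: abs_le_iff)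
  moreover have "T - 1 \<le> \<bar>R F\<bar>" if "T < \<bar>S F\<bar>" for F
    using that split[of F] D[of F] abs_triangle_ineq[of "R F" "D F"] by linarith
  ultimately have "measure_pmf.prob M {F. T < S F} \<le> measure_pmf.prob M {F. T - 1 \<le> R F}"
    "measure_pmf.prob M {F. T < \<bar>S F\<bar>} \<le> measure_pmf.prob M {F. T - 1 \<le> \<bar>R F\<bar>}"
    by (auto intro!: measure_pmf.finite_measure_mono)
  moreover note Hoeffding_offdiag_row[where n=n and i=i and P=P and w=w and t="T - 1",
      OF n i P w w_local, folded M_def R_def]
  ultimately show "measure_pmf.prob M {F. T < S F} \<le> exp (-2 * (T - 1)\<^sup>2 / n)"
    and "measure_pmf.prob M {F. T < \<bar>S F\<bar>} \<le> 2 * exp (-2 * (T - 1)\<^sup>2 / n)"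
    using T by simp_all
qed

lemma adjacency_noise_tails:
  fixes n i k :: nat and T :: real and P :: "nat \<Rightarrow> nat \<Rightarrow> real"
  defines "M \<equiv> Pi_pmf (offdiag n) False (\<lambda>(i, j). bernoulli_pmf (P i j))"
    and "a \<equiv> \<lambda>F. adj (\<lambda>a b. F (a, b))"
  assumes n: "2 \<le> n" and P: "\<And>i j. 0 \<le> P i j \<and> P i j \<le> 1" and i: "i \<in> {1..n}" and T: "1 \<le> T"
  shows "k \<noteq> i \<Longrightarrow> measure_pmf.prob M {F. T < \<bar>\<Sum>l\<in>{1..n}. (a F i l - P i l) * a F k l\<bar>}
           \<le> 2 * exp (-2 * (T - 1)\<^sup>2 / n)"
    and "measure_pmf.prob M {F. T < \<bar>\<Sum>l\<in>{1..n}. (a F i l - P i l) * P k l\<bar>}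
           \<le> 2 * exp (-2 * (T - 1)\<^sup>2 / n)"
    and "k \<noteq> i \<Longrightarrow> measure_pmf.prob M {F. T < (\<Sum>l\<in>{1..n}. (a F i l - P i l) * (a F k l - P k l))}
           \<le> exp (-2 * (T - 1)\<^sup>2 / n)"
proof -
  have "\<bar>a F k l - P k l\<bar> \<le> 1" for F l
    using P[of k l] by (auto simp: a_def adj_def)
  then show "k \<noteq> i \<Longrightarrow> measure_pmf.prob M {F. T < (\<Sum>l\<in>{1..n}. (a F i l - P i l) * (a F k l - P k l))}
      \<le> exp (-2 * (T - 1)\<^sup>2 / n)"
    unfolding M_def a_def by (rule row_deviation_tail(1)[OF n i P]) (use T in \<open>auto simp: adj_def\<close>)
  show "k \<noteq> i \<Longrightarrow> measure_pmf.prob M {F. T < \<bar>\<Sum>l\<in>{1..n}. (a F i l - P i l) * a F k l\<bar>}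
      \<le> 2 * exp (-2 * (T - 1)\<^sup>2 / n)"
    unfolding M_def a_def by (rule row_deviation_tail(2)[OF n i P]) (use T in \<open>auto simp: adj_def\<close>)
  show "measure_pmf.prob M {F. T < \<bar>\<Sum>l\<in>{1..n}. (a F i l - P i l) * P k l\<bar>} \<le> 2 * exp (-2 * (T - 1)\<^sup>2 / n)"
    unfolding M_def a_def by (rule row_deviation_tail(2)[OF n i P]) (use P T in auto)
qed

lemma concentrated_adjacency_tail:
  fixes n :: nat and P :: "nat \<Rightarrow> nat \<Rightarrow> real" and \<delta> \<epsilon> :: real
  defines "M \<equiv> Pi_pmf (offdiag n) False (\<lambda>(i, j). bernoulli_pmf (P i j))"
  assumes n: "2 \<le> n" and P: "\<And>i j. 0 \<le> P i j \<and> P i j \<le> 1"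
    and \<delta>: "2 \<le> \<delta> * n" and \<epsilon>: "1 \<le> \<epsilon> * n"
  shows "measure_pmf.prob M {F. \<not> concentrated_adjacency n \<delta> \<epsilon> P (\<lambda>a b. F (a, b))}
         \<le> 4 * (real n)\<^sup>2 * exp (-2 * (\<delta> / 2 * n - 1)\<^sup>2 / n)
           + real n * (real n - 1) * exp (-2 * (\<epsilon> * n - 1)\<^sup>2 / n)"
proof -
  let ?a = "\<lambda>F. adj (\<lambda>a b. F (a, b))"
  define e\<^sub>\<delta> where "e\<^sub>\<delta> = exp (-2 * (\<delta> / 2 * n - 1)\<^sup>2 / n)"
  define e\<^sub>\<epsilon> where "e\<^sub>\<epsilon> = exp (-2 * (\<epsilon> * n - 1)\<^sup>2 / n)"
  define E\<^sub>1 where "E\<^sub>1 = (\<lambda>(i, k). {F. \<delta> / 2 * n < \<bar>\<Sum>l\<in>{1..n}. (?a F i l - P i l) * ?a F k l\<bar>})"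
  define E\<^sub>2 where "E\<^sub>2 = (\<lambda>(k, x). {F. \<delta> / 2 * n < \<bar>\<Sum>l\<in>{1..n}. (?a F k l - P k l) * P x l\<bar>})"
  define E\<^sub>3 where "E\<^sub>3 = (\<lambda>(i, k). {F. \<epsilon> * n < (\<Sum>l\<in>{1..n}. (?a F i l - P i l) * (?a F k l - P k l))})"
  let ?U\<^sub>1 = "\<Union>p\<in>offdiag n. E\<^sub>1 p" and ?U\<^sub>2 = "\<Union>p\<in>{1..n} \<times> {1..n}. E\<^sub>2 p" and ?U\<^sub>3 = "\<Union>p\<in>offdiag n. E\<^sub>3 p"
  have "{F. \<not> concentrated_adjacency n \<delta> \<epsilon> P (\<lambda>a b. F (a, b))} \<subseteq> (?U\<^sub>1 \<union> ?U\<^sub>2) \<union> ?U\<^sub>3"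
  proof
    fix F assume "F \<in> {F. \<not> concentrated_adjacency n \<delta> \<epsilon> P (\<lambda>a b. F (a, b))}"
    then consider i k where "(i, k) \<in> offdiag n" "F \<in> E\<^sub>1 (i, k)"
      | k x where "(k, x) \<in> {1..n} \<times> {1..n}" "F \<in> E\<^sub>2 (k, x)"
      | i k where "(i, k) \<in> offdiag n" "F \<in> E\<^sub>3 (i, k)"
      unfolding concentrated_adjacency_def E\<^sub>1_def E\<^sub>2_def E\<^sub>3_def offdiag_def by force
    then show "F \<in> (?U\<^sub>1 \<union> ?U\<^sub>2) \<union> ?U\<^sub>3"
      by cases blast+
  qed
  then have "measure_pmf.prob M {F. \<not> concentrated_adjacency n \<delta> \<epsilon> P (\<lambda>a b. F (a, b))}
      \<le> measure_pmf.prob M ((?U\<^sub>1 \<union> ?U\<^sub>2) \<union> ?U\<^sub>3)"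
    by (rule measure_pmf.finite_measure_mono) simp
  also have "\<dots> \<le> measure_pmf.prob M ?U\<^sub>1 + measure_pmf.prob M ?U\<^sub>2 + measure_pmf.prob M ?U\<^sub>3"
    using measure_Un_le[of "?U\<^sub>1 \<union> ?U\<^sub>2" M ?U\<^sub>3] measure_Un_le[of ?U\<^sub>1 M ?U\<^sub>2] by simp
  also have "\<dots> \<le> card (offdiag n) * (2 * e\<^sub>\<delta>) + card ({1..n} \<times> {1..n}) * (2 * e\<^sub>\<delta>) + card (offdiag n) * e\<^sub>\<epsilon>"
    using adjacency_noise_tails[where n=n and P=P and T="\<delta> / 2 * n", OF n P]
      adjacency_noise_tails(3)[where n=n and P=P and T="\<epsilon> * n", OF n P] \<delta> \<epsilon>
    by (intro add_mono measure_pmf_UNION_le_card)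
       (auto simp: E\<^sub>1_def E\<^sub>2_def E\<^sub>3_def e\<^sub>\<delta>_def e\<^sub>\<epsilon>_def M_def offdiag_finite mem_offdiag)
  also have "\<dots> \<le> 4 * n\<^sup>2 * e\<^sub>\<delta> + n * (n - 1) * e\<^sub>\<epsilon>"
  proof -
    have "real (n * (n - 1)) \<le> real (n * n)"
      by (intro of_nat_mono mult_le_mono) auto
    then show ?thesis
      using mult_right_mono[of "real (n * (n - 1))" "real (n * n)" "2 * e\<^sub>\<delta>"]
      by (simp add: card_offdiag e\<^sub>\<delta>_def power2_eq_square)
  qed
  finally show ?thesis
    using n by (simp add: e\<^sub>\<delta>_def e\<^sub>\<epsilon>_def of_nat_diff)
qed

lemma small_communities_tail:
  fixes r :: "nat pmf" and n K :: nat and h e :: real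
  assumes n: "1 \<le> n" and r: "set_pmf r \<subseteq> {1..K}" "\<And>k. k \<in> {1..K} \<Longrightarrow> h + e \<le> pmf r k"
    and h: "0 < h" and e: "1 \<le> n * e"
  shows "measure_pmf.prob (Pi_pmf {1..n} 0 (\<lambda>_. r)) {Z. \<not> large_communities n h Z}
         \<le> K * exp (-2 * (n * e - 1)\<^sup>2 / n)"
proof -
  let ?M = "Pi_pmf {1..n} 0 (\<lambda>_. r)"
  let ?small = "{Z. \<exists>i\<in>{1..n}. real (card {j\<in>{1..n}. Z j = Z i}) < h * (real n - 1) + 1}"
  define E where "E k = {Z. real (card {j\<in>{1..n}. Z j = k}) \<le> n * pmf r k - (n * e - 1)}" for k
  have "?small \<inter> set_pmf ?M \<subseteq> (\<Union>k\<in>{1..K}. E k)"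
  proof safe
    fix Z i assume Z: "Z \<in> set_pmf ?M" and i: "i \<in> {1..n}"
      and small: "real (card {j\<in>{1..n}. Z j = Z i}) < h * (real n - 1) + 1"
    have "Z i \<in> {1..K}"
      using Z i r(1) by (auto simp: set_Pi_pmf PiE_dflt_def)
    moreover have "h * (real n - 1) + 1 \<le> n * pmf r (Z i) - (n * e - 1)"
      using mult_left_mono[OF r(2)[OF \<open>Z i \<in> {1..K}\<close>], of "real n"] h by (simp add: algebra_simps)
    ultimately show "Z \<in> (\<Union>k\<in>{1..K}. E k)"
      using small unfolding E_def by (intro UN_I[of "Z i"]) auto
  qed
  then have "measure_pmf.prob ?M (?small \<inter> set_pmf ?M) \<le> measure_pmf.prob ?M (\<Union>k\<in>{1..K}. E k)"
    by (rule measure_pmf.finite_measure_mono) simp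
  also have "\<dots> \<le> card {1..K} * exp (-2 * (n * e - 1)\<^sup>2 / n)"
  proof (rule measure_pmf_UNION_le_card)
    fix k assume "k \<in> {1..K}"
    then show "measure_pmf.prob ?M (E k) \<le> exp (-2 * (n * e - 1)\<^sup>2 / n)"
      using Pi_pmf_count_lower_tail[where J="{1..n}" and c=k and d=0 and t="n * e - 1" and r=r] n e
      by (simp add: E_def)
  qed simp
  moreover have "{Z. \<not> large_communities n h Z} = ?small"
    by (auto simp: large_communities_def not_le)
  ultimately show ?thesis
    by (simp add: measure_Int_set_pmf)
qed

lemma sbm_pmf_fst: "map_pmf fst (sbm_pmf n r B g) = Pi_pmf {1..n} 0 (\<lambda>_. r)"
  unfolding sbm_pmf_def
  by (simp add: map_bind_pmf bind_return_pmf' map_pmf_def[symmetric] o_def pmf.map_comp map_pmf_const)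

lemma sbm_pmf_prob_le:
  assumes "\<And>Z. measure_pmf.prob (Pi_pmf (offdiag n) False (\<lambda>(i, j). bernoulli_pmf (g * B (Z i) (Z j))))
                 {F. (Z, \<lambda>a b. F (a, b)) \<in> S} \<le> b"
  shows "measure_pmf.prob (sbm_pmf n r B g) S \<le> b"
  unfolding sbm_pmf_def
proof (rule measure_bind_pmf_le)
  fix Z
  show "measure_pmf.prob (Pi_pmf (offdiag n) False (\<lambda>(i, j). bernoulli_pmf (g * B (Z i) (Z j))) \<bind>
          (\<lambda>F. return_pmf (Z, \<lambda>i j. F (i, j)))) S \<le> b"
    unfolding map_pmf_def[symmetric] measure_map_pmf vimage_def using assms[of Z] by simp
qed

lemma sbm_small_communities_tail:
  fixes rho :: "nat pmf" and n K :: nat and h e :: real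
  assumes "1 \<le> n" "set_pmf rho \<subseteq> {1..K}" "\<And>k. k \<in> {1..K} \<Longrightarrow> h + e \<le> pmf rho k"
    and "0 < h" "1 \<le> n * e"
  shows "measure_pmf.prob (sbm_pmf n rho B \<gamma>) {\<omega>. \<not> large_communities n h (fst \<omega>)}
         \<le> K * exp (-2 * (n * e - 1)\<^sup>2 / n)"
proof -
  have "measure_pmf.prob (sbm_pmf n rho B \<gamma>) {\<omega>. \<not> large_communities n h (fst \<omega>)}
      = measure_pmf.prob (map_pmf fst (sbm_pmf n rho B \<gamma>)) {Z. \<not> large_communities n h Z}"
    by (simp add: measure_map_pmf vimage_def)
  then show ?thesis
    using small_communities_tail[OF assms] by (simp add: sbm_pmf_fst)
qed

lemma sbm_not_concentrated_tail:
  fixes n :: nat and B :: "nat \<Rightarrow> nat \<Rightarrow> real" and \<gamma> \<delta> \<epsilon> :: real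
  assumes n: "2 \<le> n" and B: "\<And>k l. 0 \<le> B k l \<and> B k l \<le> 1" and \<gamma>: "0 \<le> \<gamma>" "\<gamma> \<le> 1"
    and \<delta>: "2 \<le> \<delta> * n" and \<epsilon>: "1 \<le> \<epsilon> * n"
  shows "measure_pmf.prob (sbm_pmf n rho B \<gamma>)
           {\<omega>. \<not> concentrated_adjacency n \<delta> \<epsilon> (\<lambda>i j. \<gamma> * B (fst \<omega> i) (fst \<omega> j)) (snd \<omega>)}
         \<le> 4 * (real n)\<^sup>2 * exp (-2 * (\<delta> / 2 * n - 1)\<^sup>2 / n)
           + real n * (real n - 1) * exp (-2 * (\<epsilon> * n - 1)\<^sup>2 / n)"
proof (rule sbm_pmf_prob_le)
  fix Z :: "nat \<Rightarrow> nat"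
  have "0 \<le> \<gamma> * B (Z i) (Z j) \<and> \<gamma> * B (Z i) (Z j) \<le> 1" for i j
    using B[of "Z i" "Z j"] \<gamma> by (auto intro: mult_le_one)
  from concentrated_adjacency_tail[OF n this \<delta> \<epsilon>]
  show "measure_pmf.prob (Pi_pmf (offdiag n) False (\<lambda>(i, j). bernoulli_pmf (\<gamma> * B (Z i) (Z j))))
      {F. (Z, \<lambda>a b. F (a, b)) \<in>
        {\<omega>. \<not> concentrated_adjacency n \<delta> \<epsilon> (\<lambda>i j. \<gamma> * B (fst \<omega> i) (fst \<omega> j)) (snd \<omega>)}}
      \<le> 4 * (real n)\<^sup>2 * exp (-2 * (\<delta> / 2 * n - 1)\<^sup>2 / n)
        + real n * (real n - 1) * exp (-2 * (\<epsilon> * n - 1)\<^sup>2 / n)"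
    by simp
qed

theorem smoothing_error_prob_ge:
  fixes n K :: nat and rho :: "nat pmf" and B :: "nat \<Rightarrow> nat \<Rightarrow> real" and \<gamma> h e \<delta> \<epsilon> :: real
  assumes n: "2 \<le> n" and rho: "set_pmf rho \<subseteq> {1..K}" "\<And>k. k \<in> {1..K} \<Longrightarrow> h + e \<le> pmf rho k"
    and B: "\<And>k l. 0 \<le> B k l \<and> B k l \<le> 1" and \<gamma>: "0 \<le> \<gamma>" "\<gamma> \<le> 1"
    and h: "0 < h" and e: "1 \<le> n * e" and \<delta>: "2 \<le> \<delta> * n" and \<epsilon>: "1 \<le> \<epsilon> * n"
  shows "1 - K * exp (-2 * (n * e - 1)\<^sup>2 / n) - 4 * (real n)\<^sup>2 * exp (-2 * (\<delta> / 2 * n - 1)\<^sup>2 / n)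
           - real n * (real n - 1) * exp (-2 * (\<epsilon> * n - 1)\<^sup>2 / n)
         \<le> measure_pmf.prob (sbm_pmf n rho B \<gamma>)
             {(Z, A). \<forall>i\<in>{1..n}. 1 / real n * (\<Sum>j\<in>{1..n}. (Ptilde n A h i j - \<gamma> * B (Z i) (Z j))\<^sup>2)
                 \<le> 1 / real (card (NS n A h i)) + \<epsilon> + 8 * \<delta>}"
    (is "_ \<le> measure_pmf.prob ?M ?good")
proof -
  let ?P = "\<lambda>Z i j. \<gamma> * B (Z i) (Z j)"
  have P: "0 \<le> ?P Z i j \<and> ?P Z i j \<le> 1" for Z i j
    using B[of "Z i" "Z j"] \<gamma> by (auto intro: mult_le_one)
  have "0 < \<delta> * n" "0 < \<epsilon> * n"
    using \<delta> \<epsilon> by linarith+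
  then have "0 \<le> \<delta>" "0 \<le> \<epsilon>"
    by (simp_all add: zero_less_mult_iff)
  let ?small = "{\<omega>. \<not> large_communities n h (fst \<omega>)}"
    and ?spread = "{\<omega>. \<not> concentrated_adjacency n \<delta> \<epsilon> (?P (fst \<omega>)) (snd \<omega>)}"
  have good: "(Z, A) \<in> ?good" if "large_communities n h Z" "concentrated_adjacency n \<delta> \<epsilon> (?P Z) A" for Z A
  proof -
    interpret smoothing_good_event n A Z "?P Z" h \<delta> \<epsilon>
      using that n h \<open>0 \<le> \<delta>\<close> \<open>0 \<le> \<epsilon>\<close> P by unfold_locales simp_all
    show ?thesis
      using row_error_le by simp
  qed
  have "1 - measure_pmf.prob ?M ?good = measure_pmf.prob ?M (UNIV - ?good)"
    using measure_pmf.prob_compl[of ?good ?M] by simp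
  also have "\<dots> \<le> measure_pmf.prob ?M (?small \<union> ?spread)"
    using good by (intro measure_pmf.finite_measure_mono) auto
  also have "\<dots> \<le> measure_pmf.prob ?M ?small + measure_pmf.prob ?M ?spread"
    by (rule measure_Un_le) simp_all
  also have "measure_pmf.prob ?M ?small \<le> K * exp (-2 * (n * e - 1)\<^sup>2 / n)"
    using sbm_small_communities_tail[OF _ rho h e] n by simp
  also have "measure_pmf.prob ?M ?spread \<le> 4 * (real n)\<^sup>2 * exp (-2 * (\<delta> / 2 * n - 1)\<^sup>2 / n)
      + real n * (real n - 1) * exp (-2 * (\<epsilon> * n - 1)\<^sup>2 / n)"
    by (rule sbm_not_concentrated_tail[OF n B \<gamma> \<delta> \<epsilon>])
  finally show ?thesis by simp
qed

section \<open>Comparison of the exponents\<close>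

lemma large_of_bernstein_tail:
  fixes n e c :: real
  assumes e: "0 < e" and c: "2 \<le> c" and tail: "c * exp (- (1/4 * n * e\<^sup>2) / (1 + e)) < 1"
  shows "2 < n * e"
proof (rule ccontr)
  assume "\<not> 2 < n * e"
  then have "(n * e) * e \<le> 2 * e"
    using e by (intro mult_right_mono) auto
  moreover have "1/4 * n * e\<^sup>2 = 1/4 * ((n * e) * e)"
    by (simp add: power2_eq_square)
  ultimately have "1/4 * n * e\<^sup>2 \<le> 1 / 2 * (1 + e)"
    using e by argo
  then have "(1/4 * n * e\<^sup>2) / (1 + e) \<le> 1 / 2"
    using e by (simp add: divide_le_eq)
  then have "c * (1 / 2) \<le> c * exp (- (1/4 * n * e\<^sup>2) / (1 + e))"
    using c exp_ge_add_one_self[of "- (1/4 * n * e\<^sup>2) / (1 + e)"] by (intro mult_left_mono) auto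
  then show False
    using c tail by linarith
qed

lemma bernstein_exponent_le_hoeffding:
  fixes n e :: real
  assumes e: "0 < e" and ne: "2 \<le> n * e"
  shows "exp (-2 * (n * e - 1)\<^sup>2 / n) \<le> exp (- (1/4 * n * e\<^sup>2) / (1 + e))"
proof -
  have "0 < n * e"
    using ne by linarith
  then have n: "0 < n"
    using e by (simp add: zero_less_mult_iff)
  have "((n * e) / 2)\<^sup>2 \<le> (n * e - 1)\<^sup>2"
    using ne by (intro power_mono) linarith+
  then have square: "(n * e)\<^sup>2 \<le> 4 * (n * e - 1)\<^sup>2"
    by (simp add: power_divide)
  have "(1/4 * n * e\<^sup>2) / (1 + e) \<le> 1/4 * n * e\<^sup>2"
    using divide_left_mono[of 1 "1 + e" "1/4 * n * e\<^sup>2"] n e by simp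
  also have "\<dots> = (n * e)\<^sup>2 / (4 * n)"
    using n by (simp add: power2_eq_square)
  also have "\<dots> \<le> 4 * (n * e - 1)\<^sup>2 / (4 * n)"
    using square n by (intro divide_right_mono) auto
  also have "\<dots> \<le> 2 * (n * e - 1)\<^sup>2 / n"
    using n by (simp add: field_simps)
  finally show ?thesis
    by simp
qed

lemma exp_minus_two_ge: "1 / 9 \<le> exp (-2 :: real)"
proof -
  have "exp (2 :: real) = exp 1 * exp 1"
    by (simp flip: exp_add)
  also have "\<dots> \<le> 3 * 3"
    using exp_le by (intro mult_mono) auto
  finally show ?thesis
    by (simp add: exp_minus field_simps)
qed

lemma shifted_bernstein_exponent_le:
  fixes n \<delta> :: real
  assumes "0 < n" "0 \<le> \<delta>"
  shows "(1/4 * n * (\<delta> - 4 / n)\<^sup>2) / (1 + \<delta>) \<le> (\<delta> / 2 * n - 2)\<^sup>2 / n"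
proof -
  have "(1/4 * n * (\<delta> - 4 / n)\<^sup>2) / (1 + \<delta>) \<le> 1/4 * n * (\<delta> - 4 / n)\<^sup>2"
    using divide_left_mono[of 1 "1 + \<delta>" "1/4 * n * (\<delta> - 4 / n)\<^sup>2"] assms by simp
  also have "\<dots> = (\<delta> / 2 * n - 2)\<^sup>2 / n"
    using assms by (simp add: power2_eq_square field_simps)
  finally show ?thesis .
qed

lemma large_of_shifted_bernstein_tail:
  fixes n \<delta> :: real
  assumes n: "3 \<le> n" and \<delta>: "0 < \<delta>"
    and tail: "2 * n\<^sup>2 * exp (- (1/4 * n * (\<delta> - 4 / n)\<^sup>2) / (1 + \<delta>)) < 1"
  shows "4 \<le> \<delta> * n" and "exp (- ((\<delta> / 2 * n - 2)\<^sup>2 / n)) < 1 / 18"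
proof -
  have "18 \<le> 2 * n\<^sup>2"
    using n power_mono[of 3 n 2] by simp
  then have "18 * exp (- (1/4 * n * (\<delta> - 4 / n)\<^sup>2) / (1 + \<delta>))
      \<le> 2 * n\<^sup>2 * exp (- (1/4 * n * (\<delta> - 4 / n)\<^sup>2) / (1 + \<delta>))"
    by (rule mult_right_mono) simp
  then have "18 * exp (- (1/4 * n * (\<delta> - 4 / n)\<^sup>2) / (1 + \<delta>)) < 1"
    using tail by linarith
  moreover have "exp (- ((\<delta> / 2 * n - 2)\<^sup>2 / n)) \<le> exp (- (1/4 * n * (\<delta> - 4 / n)\<^sup>2) / (1 + \<delta>))"
    using shifted_bernstein_exponent_le[of n \<delta>] n \<delta> by simp
  ultimately show small: "exp (- ((\<delta> / 2 * n - 2)\<^sup>2 / n)) < 1 / 18"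
    by linarith
  show "4 \<le> \<delta> * n"
  proof (rule ccontr)
    assume "\<not> 4 \<le> \<delta> * n"
    moreover have "0 < \<delta> * n" using \<delta> n by simp
    ultimately have "(2 - \<delta> / 2 * n)\<^sup>2 \<le> 2\<^sup>2"
      by (intro power_mono) auto
    then have "(\<delta> / 2 * n - 2)\<^sup>2 / n \<le> 2"
      using n by (simp add: power2_commute divide_le_eq)
    then have "1 / 9 \<le> exp (- ((\<delta> / 2 * n - 2)\<^sup>2 / n))"
      using exp_minus_two_ge order_trans by fastforce
    then show False
      using small by linarith
  qed
qed

lemma shifted_bernstein_exponent_le_hoeffding:
  fixes n \<delta> :: real
  assumes n: "0 < n" and \<delta>: "0 < \<delta>" and large: "4 \<le> \<delta> * n"
    and small: "exp (- ((\<delta> / 2 * n - 2)\<^sup>2 / n)) \<le> 1 / 2"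
  shows "4 * n\<^sup>2 * exp (-2 * (\<delta> / 2 * n - 1)\<^sup>2 / n)
           \<le> 2 * n\<^sup>2 * exp (- (1/4 * n * (\<delta> - 4 / n)\<^sup>2) / (1 + \<delta>))"
proof -
  define Y where "Y = (\<delta> / 2 * n - 2)\<^sup>2 / n"
  have "(\<delta> / 2 * n - 2)\<^sup>2 \<le> (\<delta> / 2 * n - 1)\<^sup>2"
    using large by (intro power_mono) auto
  then have "exp (-2 * (\<delta> / 2 * n - 1)\<^sup>2 / n) \<le> exp (- Y) * exp (- Y)"
    using n by (simp add: Y_def divide_right_mono flip: exp_add)
  also have "\<dots> \<le> exp (- (1/4 * n * (\<delta> - 4 / n)\<^sup>2) / (1 + \<delta>)) * (1 / 2)"
    using shifted_bernstein_exponent_le[of n \<delta>] n \<delta> small by (intro mult_mono) (simp_all add: Y_def)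
  finally show ?thesis
    using mult_left_mono[of _ _ "4 * n\<^sup>2"] by fastforce
qed

text \<open>If one of the three terms is at least \<open>1\<close> the bound is trivial; otherwise they force \<open>n\<close> and
  the thresholds to be large enough for the Hoeffding bounds.\<close>

lemma bernstein_form_of_hoeffding_form:
  fixes n K :: nat and e\<^sub>\<pi> e\<^sub>A e\<^sub>m p :: real
  defines "T\<^sub>\<pi> \<equiv> 2 * real K * exp (- (1/4 * real n * e\<^sub>\<pi>\<^sup>2) / (1 + e\<^sub>\<pi>))"
    and "T\<^sub>A \<equiv> 2 * (real n)\<^sup>2 * exp (- (1/4 * real n * (e\<^sub>A - 4 / real n)\<^sup>2) / (1 + e\<^sub>A))"
    and "T\<^sub>m \<equiv> real n * (real n - 1) * exp (- (1/4 * real n * e\<^sub>m\<^sup>2) / (1 + e\<^sub>m))"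
  assumes K: "1 \<le> K" and e: "0 < e\<^sub>\<pi>" "e\<^sub>\<pi> < 1" "0 < e\<^sub>A" "0 < e\<^sub>m" and p: "0 \<le> p"
    and hoeffding: "3 \<le> n \<Longrightarrow> 1 \<le> n * e\<^sub>\<pi> \<Longrightarrow> 2 \<le> e\<^sub>A * n \<Longrightarrow> 1 \<le> e\<^sub>m * n \<Longrightarrow>
      1 - K * exp (-2 * (n * e\<^sub>\<pi> - 1)\<^sup>2 / n) - 4 * (real n)\<^sup>2 * exp (-2 * (e\<^sub>A / 2 * n - 1)\<^sup>2 / n)
        - real n * (real n - 1) * exp (-2 * (e\<^sub>m * n - 1)\<^sup>2 / n) \<le> p"
  shows "1 - T\<^sub>\<pi> - T\<^sub>A - T\<^sub>m \<le> p"
proof (cases "T\<^sub>\<pi> < 1 \<and> T\<^sub>A < 1 \<and> T\<^sub>m < 1")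
  case False
  moreover have "0 \<le> T\<^sub>\<pi>" "0 \<le> T\<^sub>A" "0 \<le> T\<^sub>m"
    by (simp_all add: T\<^sub>\<pi>_def T\<^sub>A_def T\<^sub>m_def, cases n) auto
  ultimately show ?thesis
    using p by linarith
next
  case True
  then have T: "T\<^sub>\<pi> < 1" "T\<^sub>A < 1" "T\<^sub>m < 1"
    by simp_all
  have "2 < n * e\<^sub>\<pi>"
    using large_of_bernstein_tail[OF e(1) _ T(1)[unfolded T\<^sub>\<pi>_def]] K by simp
  then have n: "3 \<le> n"
    using e(1,2) mult_left_le[of e\<^sub>\<pi> "real n"] by linarith
  then have "2 \<le> real n * (real n - 1)"
    using mult_mono[of 2 "real n" 1 "real n - 1"] by simp
  then have "2 < n * e\<^sub>m"
    using large_of_bernstein_tail[OF e(4) _ T(3)[unfolded T\<^sub>m_def]] by simp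
  note A = large_of_shifted_bernstein_tail[of "real n", OF _ e(3) T(2)[unfolded T\<^sub>A_def]]
  have "1 \<le> n * e\<^sub>\<pi>" "2 \<le> e\<^sub>A * n" "1 \<le> e\<^sub>m * n"
    using \<open>2 < n * e\<^sub>\<pi>\<close> A(1) \<open>2 < n * e\<^sub>m\<close> n by (simp_all add: mult.commute)
  with n have hoeffding: "1 - K * exp (-2 * (n * e\<^sub>\<pi> - 1)\<^sup>2 / n)
      - 4 * (real n)\<^sup>2 * exp (-2 * (e\<^sub>A / 2 * n - 1)\<^sup>2 / n)
      - real n * (real n - 1) * exp (-2 * (e\<^sub>m * n - 1)\<^sup>2 / n) \<le> p"
    by (rule hoeffding)
  have "real K * exp (-2 * (n * e\<^sub>\<pi> - 1)\<^sup>2 / n) \<le> real K * exp (- (1/4 * real n * e\<^sub>\<pi>\<^sup>2) / (1 + e\<^sub>\<pi>))"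
    using bernstein_exponent_le_hoeffding[where n="real n" and e=e\<^sub>\<pi>] e(1) \<open>2 < n * e\<^sub>\<pi>\<close>
    by (intro mult_left_mono) auto
  moreover have "0 \<le> real K * exp (- (1/4 * real n * e\<^sub>\<pi>\<^sup>2) / (1 + e\<^sub>\<pi>))"
    by simp
  moreover have "4 * (real n)\<^sup>2 * exp (-2 * (e\<^sub>A / 2 * n - 1)\<^sup>2 / n) \<le> T\<^sub>A"
    unfolding T\<^sub>A_def using A n e(3) by (intro shifted_bernstein_exponent_le_hoeffding) auto
  moreover have "real n * (real n - 1) * exp (-2 * (e\<^sub>m * n - 1)\<^sup>2 / n) \<le> T\<^sub>m"
    unfolding T\<^sub>m_def mult.commute[of e\<^sub>m]
    using bernstein_exponent_le_hoeffding[where n="real n" and e=e\<^sub>m] e(4) \<open>2 < n * e\<^sub>m\<close>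
      \<open>2 \<le> real n * (real n - 1)\<close>
    by (intro mult_left_mono) auto
  ultimately show ?thesis
    using hoeffding unfolding T\<^sub>\<pi>_def by linarith
qed

lemma rho_min_le_pmf: "k \<in> {1..K} \<Longrightarrow> rho_min K r \<le> pmf r k"
  unfolding rho_min_def by (intro Min_le) auto

theorem theorem1:
  fixes K :: "nat \<Rightarrow> nat" and rho :: "nat \<Rightarrow> nat pmf"
    and B :: "nat \<Rightarrow> nat \<Rightarrow> nat \<Rightarrow> real" and gamma :: "nat \<Rightarrow> real"
    and n :: nat and h eps_m eps_AP eps_pi :: real
  assumes K_pos: "\<And>n. K n \<ge> 1"
    and rho_supp: "\<And>n. set_pmf (rho n) \<subseteq> {1..K n}"
    and rho_min_pos: "\<And>n. rho_min (K n) (rho n) > 0"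
    and B_range: "\<And>n k l. 0 \<le> B n k l \<and> B n k l \<le> 1"
    and gamma_range: "\<And>n. 0 < gamma n \<and> gamma n \<le> 1"
    and cond_ab: "\<exists>n_rho C_rho C_pi eta.
        C_rho > 0 \<and>
        (\<forall>n\<ge>n_rho. rho_min (K n) (rho n) \<ge> C_rho * sqrt (ln (real n) / real n)) \<and>
        0 < C_pi \<and> C_pi < C_rho \<and>
        (\<forall>n\<ge>1. eta n > 0 \<and> rho_min (K n) (rho n) > eta n \<and>
                 eta n \<ge> C_pi * sqrt (ln (real n) / real n)) \<and>
        filterlim (\<lambda>n. (1/4 * real n * (eta n)\<^sup>2) / (1 + eta n) - ln (2 * real (K n)))
                  at_top sequentially \<and>
        ((\<lambda>n. real (K n) * real n powr (- (C_pi\<^sup>2) / 4)) \<longlonglongrightarrow> 0)"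
    and h: "0 < h" "h < 1"
    and eps: "eps_m > 0" "eps_AP > 0" "eps_pi > 0" "eps_pi \<le> rho_min (K n) (rho n) - h"
  shows "measure_pmf.prob (sbm_pmf n (rho n) (B n) (gamma n))
           {(Z, A). \<forall>i\<in>{1..n}.
              1 / real n * (\<Sum>j\<in>{1..n}. (Ptilde n A h i j - gamma n * B n (Z i) (Z j))\<^sup>2)
              \<le> 1 / real (card (NS n A h i)) + eps_m + 2 / real n + 8 * eps_AP}
         \<ge> 1 - 2 * real (K n) * exp (- (1/4 * real n * eps_pi\<^sup>2) / (1 + eps_pi))
             - 2 * (real n)\<^sup>2 * exp (- (1/4 * real n * (eps_AP - 4 / real n)\<^sup>2) / (1 + eps_AP))
             - real n * (real n - 1) * exp (- (1/4 * real n * eps_m\<^sup>2) / (1 + eps_m))"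
proof -
  have rho: "h + eps_pi \<le> pmf (rho n) k" if "k \<in> {1..K n}" for k
    using rho_min_le_pmf[OF that, of "rho n"] eps(4) by linarith
  then have "eps_pi < 1"
    using K_pos[of n] pmf_le_1[of "rho n" 1] h by fastforce
  have slack: "measure_pmf.prob (sbm_pmf n (rho n) (B n) (gamma n))
      {(Z, A). \<forall>i\<in>{1..n}. 1 / real n * (\<Sum>j\<in>{1..n}. (Ptilde n A h i j - gamma n * B n (Z i) (Z j))\<^sup>2)
         \<le> 1 / real (card (NS n A h i)) + eps_m + 8 * eps_AP}
    \<le> measure_pmf.prob (sbm_pmf n (rho n) (B n) (gamma n))
      {(Z, A). \<forall>i\<in>{1..n}. 1 / real n * (\<Sum>j\<in>{1..n}. (Ptilde n A h i j - gamma n * B n (Z i) (Z j))\<^sup>2)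
         \<le> 1 / real (card (NS n A h i)) + eps_m + 2 / real n + 8 * eps_AP}"
    by (intro measure_pmf.finite_measure_mono) (auto intro: order_trans[OF _ add_right_mono])
  show ?thesis
    by (rule bernstein_form_of_hoeffding_form[OF K_pos eps(3) \<open>eps_pi < 1\<close> eps(2,1) measure_nonneg],
        rule order_trans[OF _ slack],
        rule smoothing_error_prob_ge[where B="B n" and \<gamma>="gamma n", OF _ rho_supp rho B_range])
       (use gamma_range[of n] h in auto)
qed

end
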